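(* Suppose $f$ is log-concave and symmetric about its mean, let $t\ge0$, and let $\delta$ be any non-null classifier. Let $\gamma_\mu$ be the median cost. Then the median individual's payoff from reward $r_1^*=k_1/\rho$ when complying, $-\gamma_\mu+k_1(1-F(k_1))+tF(k_1)$, is at least as high as the median individual's payoff from reward $r_0^*=k_0/\rho$ when not complying, $-k_0F(k_0)+tF(k_0)$, if and only if $\gamma_\mu\le t$.
   Context: Costs $\gamma_i\in\mathbb{R}$ of compliance are distributed according to a continuously differentiable CDF $F$ with density $f$ of full support on $\mathbb{R}$; $\gamma_\mu$ satisfies $F(\gamma_\mu)=\tfrac12$. A classifier $\delta=(\delta_1,\delta_0)\in[0,1]^2$ has responsiveness $\rho=(\delta_1+\delta_0-1)(2\phi-1)$ with $\phi\in(\tfrac12,1]$, non-null meaning $\rho\neq0$. Individuals with $d_i=1$ receive reward $r$, financed by an equal tax (budget balance), and each gets $t$ times the compliance rate $F(r\rho)$. Conditional payoffs from reward $r$: complying, $-\gamma_i+r\rho(1-F(r\rho))+tF(r\rho)$; not complying, $-r\rho F(r\rho)+tF(r\rho)$. The numbers $k_0,k_1$ are defined by $k_0=t-\frac{F(k_0)}{f(k_0)}$ and $k_1=t+\frac{1-F(k_1)}{f(k_1)}$, so $r_1^*$ and $r_0^*$ are the maximizers of the complying and non-complying conditional payoffs respectively. *)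

theory Defs
  imports "HOL-Analysis.Analysis"
begin

definition is_cdf_with_density :: "(real \<Rightarrow> real) \<Rightarrow> (real \<Rightarrow> real) \<Rightarrow> bool" where
  "is_cdf_with_density F f \<longleftrightarrow>
     mono F \<and> (F \<longlongrightarrow> 0) at_bot \<and> (F \<longlongrightarrow> 1) at_top \<and>
     (\<forall>x. (F has_real_derivative f x) (at x)) \<and> continuous_on UNIV f \<and>
     (\<forall>x. f x > 0)"

definition log_concave :: "(real \<Rightarrow> real) \<Rightarrow> bool" where
  "log_concave f \<longleftrightarrow> (\<forall>x. f x > 0) \<and> concave_on UNIV (\<lambda>x. ln (f x))"

definition density_mean :: "(real \<Rightarrow> real) \<Rightarrow> real" where
  "density_mean f = (\<integral>x. x * f x \<partial>lborel)"

definition symmetric_about_mean :: "(real \<Rightarrow> real) \<Rightarrow> bool" where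
  "symmetric_about_mean f \<longleftrightarrow>
     integrable lborel (\<lambda>x. x * f x) \<and>
     (\<forall>x. f (density_mean f + x) = f (density_mean f - x))"

definition responsiveness :: "real \<Rightarrow> real \<Rightarrow> real \<Rightarrow> real" where
  "responsiveness d1 d0 phi = (d1 + d0 - 1) * (2 * phi - 1)"

end

theory Submission
  imports Defs
begin

text \<open>
  Read \<open>(p - c) * (1 - F p)\<close> as the profit of a monopolist with marginal cost \<open>c\<close>
  facing demand \<open>1 - F\<close>. Log-concavity of \<open>f\<close> makes the Mills ratio \<open>(1 - F) / f\<close>
  decreasing, so the virtual value \<open>p - (1 - F p) / f p\<close> is an increasing bijection
  and its unique solution of \<open>virtual_value p = c\<close> is the optimal price at cost \<open>c\<close>.
  Hence \<open>k1\<close> is the optimal price at cost \<open>t\<close> and,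
  since symmetry about the mean \<open>m\<close> gives \<open>F (2m - x) = 1 - F x\<close>, \<open>2m - k0\<close> is the
  optimal price at cost \<open>2m - t\<close>. With \<open>P\<close> the optimal profit, the payoff difference is
  \<open>W t - m\<close> where \<open>W c = c + P c - P (2m - c)\<close>. By the envelope theorem
  \<open>P' c = -(1 - F (optimal price at c))\<close>, so \<open>W' c = F (k1 c) - F (k0 c)\<close>, where
  \<open>k0 c < c < k1 c\<close> solve the two first-order conditions at \<open>t = c\<close>; thus \<open>W\<close> is
  strictly increasing. Since \<open>W m = m\<close> and \<open>m\<close> is the median, the difference is
  nonnegative iff \<open>m \<le> t\<close>.
\<close>

lemma concave_on_increment_antimono:
  fixes g :: "real \<Rightarrow> real"
  assumes g: "concave_on UNIV g" and "x \<le> y" "0 \<le> u"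
  shows "g (y + u) - g y \<le> g (x + u) - g x"
proof (cases "x = y")
  case True
  then show ?thesis by simp
next
  case False
  then have "y + u - x > 0" using assms by simp
  define s where "s = (g (y + u) - g x) / (y + u - x)"
  \<comment> \<open>both \<open>x + u\<close> and \<open>y\<close> lie above the chord of \<open>g\<close> over \<open>[x, y + u]\<close>\<close>
  have I: "concave_on {x..y + u} g"
    using g convex_on_subset[of UNIV "\<lambda>x. - g x"] by (simp add: concave_on_def)
  have "s * (x + u - x) + g x \<le> g (x + u)" "s * (y - x) + g x \<le> g y"
    using concave_onD_Icc'[OF I, of "x + u"] concave_onD_Icc'[OF I, of y] assms
    by (simp_all add: s_def)
  moreover have "s * (x + u - x) + s * (y - x) = s * (y + u - x)"
    by (simp add: algebra_simps)
  moreover have "s * (y + u - x) = g (y + u) - g x"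
    using \<open>y + u - x > 0\<close> by (simp add: s_def)
  ultimately show ?thesis by linarith
qed

lemma DERIV_continuous_subgradient:
  fixes P s :: "real \<Rightarrow> real"
  assumes subgradient: "\<And>c d. P c + (d - c) * s c \<le> P d"
    and cont: "isCont s c"
  shows "(P has_real_derivative s c) (at c)"
proof -
  have bound: "\<bar>(P d - P c) / (d - c) - s c\<bar> \<le> \<bar>s d - s c\<bar>" if "d \<noteq> c" for d
  proof -
    have "(d - c) * s c \<le> P d - P c" "P d - P c \<le> (d - c) * s d"
      using subgradient[of c d] subgradient[of d c] by (simp_all add: algebra_simps)
    then have "s c \<le> (P d - P c) / (d - c) \<and> (P d - P c) / (d - c) \<le> s d \<or>
               s d \<le> (P d - P c) / (d - c) \<and> (P d - P c) / (d - c) \<le> s c"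
      using that by (cases "d < c") (auto simp: le_divide_eq divide_le_eq mult.commute)
    then show ?thesis
      by linarith
  qed
  have "\<forall>\<^sub>F d in at c. norm ((P d - P c) / (d - c) - s c) \<le> \<bar>s d - s c\<bar>"
    unfolding eventually_at_filter by (intro always_eventually) (simp add: bound)
  moreover have "((\<lambda>d. \<bar>s d - s c\<bar>) \<longlongrightarrow> 0) (at c)"
    using cont unfolding isCont_def by (intro tendsto_rabs_zero LIM_zero)
  ultimately have "((\<lambda>d. (P d - P c) / (d - c) - s c) \<longlongrightarrow> 0) (at c)"
    by (rule Lim_null_comparison)
  then show ?thesis
    by (simp add: has_field_derivative_iff LIM_zero_cancel)
qed

locale cdf_with_positive_density =
  fixes F f :: "real \<Rightarrow> real"
  assumes F_deriv: "\<And>x. (F has_real_derivative f x) (at x)"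
    and density_pos: "\<And>x. 0 < f x"
    and F_at_bot: "(F \<longlongrightarrow> 0) at_bot"
    and F_at_top: "(F \<longlongrightarrow> 1) at_top"
begin

lemma density_nonzero [simp]: "f x \<noteq> 0"
  using density_pos[of x] by simp

lemma F_deriv_chain [derivative_intros]:
  "(g has_real_derivative g') (at x) \<Longrightarrow> ((\<lambda>x. F (g x)) has_real_derivative f (g x) * g') (at x)"
  using DERIV_chain2[OF F_deriv] .

lemma isCont_F: "isCont F x"
  using F_deriv by (rule DERIV_isCont)

lemma F_strict_mono: "strict_mono F"
proof (rule strict_monoI)
  show "F x < F y" if "x < y" for x y
    by (rule DERIV_pos_imp_increasing[OF that]) (use F_deriv density_pos in blast)
qed

lemma F_shift_at_top: "((\<lambda>u. F (x + u)) \<longlongrightarrow> 1) at_top"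
  using filterlim_compose[OF F_at_top filterlim_tendsto_add_at_top[OF tendsto_const filterlim_ident]] .

lemma F_less_1: "F x < 1"
proof -
  have "\<forall>\<^sub>F u in at_top. F (x + 1) \<le> F (x + u)"
    using eventually_ge_at_top[of 1] by eventually_elim (simp add: F_strict_mono strict_mono_less_eq)
  then have "F (x + 1) \<le> 1"
    by (rule tendsto_lowerbound[OF F_shift_at_top]) simp
  then show ?thesis
    using strict_monoD[OF F_strict_mono, of x "x + 1"] by simp
qed

lemma F_symmetric:
  assumes symmetric: "\<And>x. f (m + x) = f (m - x)"
  shows "F (m + x) + F (m - x) = 1"
proof -
  define S where "S x = F (m + x) + F (m - x)" for x
  have "(S has_real_derivative f (m + x) - f (m - x)) (at x)" for x
    unfolding S_def by (auto intro!: derivative_eq_intros)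
  then have S_const: "S = (\<lambda>_. S 0)"
    using DERIV_isconst_all[of S] symmetric by auto
  have "filterlim (\<lambda>x. m + - x) at_bot at_top"
    by (subst filterlim_tendsto_add_at_bot_iff[OF tendsto_const]) (rule filterlim_uminus_at_bot_at_top)
  then have "((\<lambda>x. F (m - x)) \<longlongrightarrow> 0) at_top"
    using filterlim_compose[OF F_at_bot] by simp
  then have "(S \<longlongrightarrow> 1 + 0) at_top"
    unfolding S_def by (intro tendsto_add F_shift_at_top)
  then have "S 0 = 1"
    by (subst (asm) S_const) (simp add: tendsto_const_iff)
  then show ?thesis
    using S_const by (metis S_def)
qed

definition virtual_value :: "real \<Rightarrow> real" where
  "virtual_value p = p - (1 - F p) / f p"

definition monopoly_price :: "real \<Rightarrow> real" where
  "monopoly_price c = (THE p. virtual_value p = c)"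

definition monopoly_profit :: "real \<Rightarrow> real" where
  "monopoly_profit c = (monopoly_price c - c) * (1 - F (monopoly_price c))"

end

locale log_concave_cdf = cdf_with_positive_density +
  assumes ln_density_concave: "concave_on UNIV (\<lambda>x. ln (f x))"
begin

lemma isCont_density: "isCont f x"
proof -
  have "convex_on UNIV (\<lambda>x. - ln (f x))"
    using ln_density_concave by (simp add: concave_on_def)
  then have "continuous_on UNIV (\<lambda>x. - ln (f x))"
    by (rule convex_on_continuous[OF open_UNIV])
  then have "isCont (\<lambda>x. - ln (f x)) x"
    by (simp add: continuous_on_eq_continuous_at)
  from isCont_minus[OF this] have "isCont (\<lambda>x. ln (f x)) x"
    by simp
  from isCont_o2[OF this isCont_exp] show ?thesis
    by (simp add: exp_ln[OF density_pos])
qed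

lemma density_shift_ratio_antimono:
  assumes "x \<le> y" "0 \<le> u"
  shows "f x * f (y + u) \<le> f (x + u) * f y"
proof -
  have "ln (f (y + u)) - ln (f y) \<le> ln (f (x + u)) - ln (f x)"
    using concave_on_increment_antimono[OF ln_density_concave assms] .
  then have "exp (ln (f x) + ln (f (y + u))) \<le> exp (ln (f (x + u)) + ln (f y))"
    by simp
  then show ?thesis
    by (simp add: exp_add density_pos)
qed

lemma mills_ratio_antimono:
  assumes "x \<le> y"
  shows "(1 - F y) / f y \<le> (1 - F x) / f x"
proof -
  define G where "G u = (F (x + u) - F x) * f y - (F (y + u) - F y) * f x" for u
  have G_mono: "G 0 \<le> G u" if "0 \<le> u" for u
  proof (rule DERIV_nonneg_imp_nondecreasing[OF that])
    fix z assume "0 \<le> z" "z \<le> u"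
    have "(G has_real_derivative f (x + z) * f y - f (y + z) * f x) (at z)"
      unfolding G_def by (auto intro!: derivative_eq_intros)
    moreover have "0 \<le> f (x + z) * f y - f (y + z) * f x"
      using density_shift_ratio_antimono[OF assms \<open>0 \<le> z\<close>] by (simp add: mult.commute)
    ultimately show "\<exists>d. (G has_real_derivative d) (at z) \<and> 0 \<le> d"
      by blast
  qed
  have G_nonneg: "\<forall>\<^sub>F u in at_top. 0 \<le> G u"
    using eventually_ge_at_top[of 0] by (rule eventually_mono) (use G_mono in \<open>simp add: G_def\<close>)
  have "(G \<longlongrightarrow> (1 - F x) * f y - (1 - F y) * f x) at_top"
    unfolding G_def by (intro tendsto_intros F_shift_at_top)
  then have "0 \<le> (1 - F x) * f y - (1 - F y) * f x"
    using G_nonneg by (rule tendsto_lowerbound) simp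
  then show ?thesis
    by (simp add: divide_simps density_pos)
qed

lemma virtual_value_strict_mono: "strict_mono virtual_value"
proof (rule strict_monoI)
  show "virtual_value x < virtual_value y" if "x < y" for x y
    using that mills_ratio_antimono[of x y] by (simp add: virtual_value_def)
qed

lemma isCont_virtual_value: "isCont virtual_value x"
  unfolding virtual_value_def
  by (intro continuous_intros isCont_F isCont_density density_nonzero)

lemma virtual_value_surj: "\<exists>p. virtual_value p = c"
proof -
  define h where "h = (1 - F c) / f c"
  have "0 < h"
    using F_less_1 density_pos by (simp add: h_def)
  moreover have "virtual_value c \<le> c" "c \<le> virtual_value (c + h)"
    using \<open>0 < h\<close> mills_ratio_antimono[of c "c + h"] by (simp_all add: virtual_value_def h_def)
  ultimately show ?thesis
    using IVT[of virtual_value c c "c + h"] isCont_virtual_value by auto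
qed

lemma monopoly_price_eqI:
  assumes "virtual_value p = c"
  shows "monopoly_price c = p"
  unfolding monopoly_price_def
proof (rule the_equality)
  show "virtual_value p' = c \<Longrightarrow> p' = p" for p'
    using assms strict_mono_eq[OF virtual_value_strict_mono, of p' p] by simp
qed (fact assms)

lemma virtual_value_monopoly_price: "virtual_value (monopoly_price c) = c"
  using virtual_value_surj monopoly_price_eqI by metis

lemma less_monopoly_price: "c < monopoly_price c"
proof -
  have "0 < (1 - F (monopoly_price c)) / f (monopoly_price c)"
    using F_less_1 density_pos by simp
  then show ?thesis
    using virtual_value_monopoly_price[of c] by (simp add: virtual_value_def)
qed

lemma isCont_monopoly_price: "isCont monopoly_price c"
proof -
  have "isCont monopoly_price (virtual_value (monopoly_price c))"
    by (rule isCont_inverse_function[of 1]) (auto simp: monopoly_price_eqI isCont_virtual_value)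
  then show ?thesis
    by (simp add: virtual_value_monopoly_price)
qed

lemma monopoly_price_optimal: "(p - c) * (1 - F p) \<le> monopoly_profit c"
proof -
  define q where "q = monopoly_price c"
  define \<pi> where "\<pi> p = (p - c) * (1 - F p)" for p
  have \<pi>_deriv: "(\<pi> has_real_derivative f z * (c - virtual_value z)) (at z)" for z
  proof -
    have "(\<pi> has_real_derivative (1 - F z) - (z - c) * f z) (at z)"
      unfolding \<pi>_def by (auto intro!: derivative_eq_intros)
    moreover have "(1 - F z) - (z - c) * f z = f z * (c - virtual_value z)"
      using density_pos[of z] by (simp add: virtual_value_def field_simps)
    ultimately show ?thesis by simp
  qed
  have below: "virtual_value z \<le> c \<longleftrightarrow> z \<le> q" and above: "c \<le> virtual_value z \<longleftrightarrow> q \<le> z" for z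
    using strict_mono_less_eq[OF virtual_value_strict_mono]
    by (metis q_def virtual_value_monopoly_price)+
  have "\<pi> p \<le> \<pi> q"
  proof (cases "p \<le> q")
    case True
    then show ?thesis
    proof (rule DERIV_nonneg_imp_nondecreasing)
      fix z assume "p \<le> z" "z \<le> q"
      then have "0 \<le> f z * (c - virtual_value z)"
        using below density_pos[of z] by simp
      then show "\<exists>d. (\<pi> has_real_derivative d) (at z) \<and> 0 \<le> d"
        using \<pi>_deriv by blast
    qed
  next
    case False
    then have "q \<le> p" by simp
    then show ?thesis
    proof (rule DERIV_nonpos_imp_nonincreasing)
      fix z assume "q \<le> z" "z \<le> p"
      then have "f z * (c - virtual_value z) \<le> 0"
        using above density_pos[of z] by (simp add: mult_le_0_iff)
      then show "\<exists>d. (\<pi> has_real_derivative d) (at z) \<and> d \<le> 0"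
        using \<pi>_deriv by blast
    qed
  qed
  then show ?thesis
    by (simp add: \<pi>_def q_def monopoly_profit_def)
qed

lemma monopoly_profit_deriv:
  "(monopoly_profit has_real_derivative - (1 - F (monopoly_price c))) (at c)"
proof (rule DERIV_continuous_subgradient)
  show "monopoly_profit c + (d - c) * - (1 - F (monopoly_price c)) \<le> monopoly_profit d" for c d
    using monopoly_price_optimal[of "monopoly_price c" d]
    by (simp add: monopoly_profit_def algebra_simps)
  show "isCont (\<lambda>c. - (1 - F (monopoly_price c))) c"
    by (intro continuous_intros isCont_o2[OF isCont_monopoly_price isCont_F])
qed

lemma strict_mono_profit_balance:
  assumes symmetric: "\<And>x. f (m + x) = f (m - x)"
  shows "strict_mono (\<lambda>c. c + monopoly_profit c - monopoly_profit (2 * m - c))"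
proof -
  define W where "W c = c + monopoly_profit c - monopoly_profit (2 * m - c)" for c
  have W_deriv: "(W has_real_derivative F (monopoly_price z) - (1 - F (monopoly_price (2 * m - z)))) (at z)"
    for z
  proof -
    have "((\<lambda>c. monopoly_profit (2 * m - c)) has_real_derivative
        - (1 - F (monopoly_price (2 * m - z))) * - 1) (at z)"
      by (rule DERIV_chain2[OF monopoly_profit_deriv]) (auto intro!: derivative_eq_intros)
    then have "(W has_real_derivative
        1 + - (1 - F (monopoly_price z)) - (- (1 - F (monopoly_price (2 * m - z))) * - 1)) (at z)"
      unfolding W_def[abs_def] by (intro DERIV_diff DERIV_add DERIV_ident monopoly_profit_deriv)
    then show ?thesis
      by (rule DERIV_cong) simp
  qed
  have W_deriv_pos: "0 < F (monopoly_price z) - (1 - F (monopoly_price (2 * m - z)))" for z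
  proof -
    have "2 * m - monopoly_price (2 * m - z) < monopoly_price z"
      using less_monopoly_price[of z] less_monopoly_price[of "2 * m - z"] by simp
    then have "F (2 * m - monopoly_price (2 * m - z)) < F (monopoly_price z)"
      by (rule strict_monoD[OF F_strict_mono])
    moreover have "F (2 * m - monopoly_price (2 * m - z)) = 1 - F (monopoly_price (2 * m - z))"
      using F_symmetric[OF symmetric, of "monopoly_price (2 * m - z) - m"] by simp
    ultimately show ?thesis
      by simp
  qed
  have "strict_mono W"
  proof (rule strict_monoI)
    show "W a < W b" if "a < b" for a b
      by (rule DERIV_pos_imp_increasing[OF that]) (use W_deriv W_deriv_pos in blast)
  qed
  then show ?thesis
    by (simp add: W_def[abs_def])
qed

end

theorem proposition9:
  fixes F f :: "real \<Rightarrow> real"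
    and t gamma_mu k0 k1 d1 d0 phi :: real
  assumes cdf: "is_cdf_with_density F f"
    and logc: "log_concave f"
    and symm: "symmetric_about_mean f"
    and t_nonneg: "t \<ge> 0"
    and median: "F gamma_mu = 1 / 2"
    and k0_def: "k0 = t - F k0 / f k0"
    and k1_def: "k1 = t + (1 - F k1) / f k1"
    and d1: "d1 \<in> {0..1}" and d0: "d0 \<in> {0..1}"
    and phi: "phi \<in> {1/2<..1}"
    and nonnull: "responsiveness d1 d0 phi \<noteq> 0"
  shows "(- gamma_mu + k1 * (1 - F k1) + t * F k1 \<ge> - k0 * F k0 + t * F k0)
           \<longleftrightarrow> gamma_mu \<le> t"
proof -
  \<comment> \<open>The classifier only rescales the optimal rewards (\<open>r = k / \<rho>\<close>).\<close>
  interpret log_concave_cdf F f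
    using cdf logc unfolding is_cdf_with_density_def log_concave_def by unfold_locales auto
  define m where "m = density_mean f"
  have symmetric: "f (m + x) = f (m - x)" for x
    using symm unfolding symmetric_about_mean_def m_def by auto
  have reflect: "F (2 * m - x) = 1 - F x" "f (2 * m - x) = f x" for x
    using F_symmetric[OF symmetric, of "m - x"] symmetric[of "m - x"] by simp_all
  have "F gamma_mu = F m"
    using median F_symmetric[OF symmetric, of 0] by simp
  then have "gamma_mu = m"
    using strict_mono_eq[OF F_strict_mono] by blast
  have "monopoly_price t = k1"
    using k1_def by (intro monopoly_price_eqI) (simp add: virtual_value_def)
  then have profit_t: "monopoly_profit t = (k1 - t) * (1 - F k1)"
    by (simp add: monopoly_profit_def)
  have "monopoly_price (2 * m - t) = 2 * m - k0"
    using k0_def by (intro monopoly_price_eqI) (simp add: virtual_value_def reflect)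
  then have profit_reflected_t: "monopoly_profit (2 * m - t) = (t - k0) * F k0"
    by (simp add: monopoly_profit_def reflect)
  have "(- gamma_mu + k1 * (1 - F k1) + t * F k1 \<ge> - k0 * F k0 + t * F k0) \<longleftrightarrow>
      m + monopoly_profit m - monopoly_profit (2 * m - m) \<le> t + monopoly_profit t - monopoly_profit (2 * m - t)"
    unfolding profit_t profit_reflected_t \<open>gamma_mu = m\<close> by (simp add: algebra_simps)
  also have "\<dots> \<longleftrightarrow> m \<le> t"
    using strict_mono_less_eq[OF strict_mono_profit_balance[OF symmetric]] .
  finally show ?thesis
    using \<open>gamma_mu = m\<close> by simp
qed

end
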